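(* There exists a deal and a legal game that is a tranca mínima (as defined in the context) in which the winning team obtains $107$ points.
   Context: Domino tiles: the set of tiles consists of the 28 unordered pairs $[a,b]=[b,a]$ with $a,b\in\{0,1,\dots,6\}$; the number of points (pips) of $[a,b]$ is $a+b$. Four players, numbered 1 to 4, play; players 1 and 3 form one team and players 2 and 4 the other. The 28 tiles are dealt, 7 to each player (the initial hands). Players take turns in cyclic order $1,2,3,4,1,\dots$. The starting player places any one of their tiles on the table, forming a line of tiles (the board) with two open ends. On each subsequent turn, the player whose turn it is must, if they hold a tile containing a number equal to the number shown at one of the two open ends, place such a tile at that end (with equal numbers adjacent), the other number of the tile becoming the new open end; if they hold no such tile, they pass. A game ends either when a player places their last tile, or in a tranca (blocked game): a position in which no player holds a tile that can be placed. In a game ending in a tranca, the team whose two players' remaining tiles have the smaller total number of pips wins, and it obtains as points the total number of pips on the tiles remaining in the hands of the two players of the other (losing) team. A tranca mínima is a game ending in a tranca in which the total number of pips on the tiles of the board at the end of the game is $42$. *)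

theory Defs
  imports Main
begin

text \<open>Tiles [a,b] are represented as pairs (a,b) with a \<le> b \<le> 6.
  Players 1,2,3,4 are represented by 0,1,2,3; teams are {0,2} (players 1,3)
  and {1,3} (players 2,4).\<close>

type_synonym tile = "nat \<times> nat"
type_synonym ends = "(nat \<times> nat) option"

definition all_tiles :: "tile set" where
  "all_tiles = {(a, b). a \<le> b \<and> b \<le> 6}"

definition pips :: "tile \<Rightarrow> nat" where
  "pips t = fst t + snd t"

definition matches :: "tile \<Rightarrow> nat \<Rightarrow> bool" where
  "matches t x \<longleftrightarrow> fst t = x \<or> snd t = x"

definition other :: "tile \<Rightarrow> nat \<Rightarrow> nat" where
  "other t x = (if fst t = x then snd t else fst t)"

definition playable :: "tile set \<Rightarrow> nat \<times> nat \<Rightarrow> bool" where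
  "playable h e \<longleftrightarrow> (\<exists>t\<in>h. matches t (fst e) \<or> matches t (snd e))"

definition is_deal :: "(nat \<Rightarrow> tile set) \<Rightarrow> bool" where
  "is_deal H \<longleftrightarrow> (\<forall>p<4. H p \<subseteq> all_tiles \<and> card (H p) = 7)
     \<and> (\<forall>p<4. \<forall>q<4. p \<noteq> q \<longrightarrow> H p \<inter> H q = {})
     \<and> (\<Union>p<4. H p) = all_tiles"

text \<open>A move: pass, or place a tile at the left (True) or right (False) open end.
  For the very first move the side is irrelevant.\<close>
datatype move = Pass | Play tile bool

definition step :: "nat \<Rightarrow> (nat \<Rightarrow> tile set) \<Rightarrow> ends \<Rightarrow> tile list \<Rightarrow> move
    \<Rightarrow> ((nat \<Rightarrow> tile set) \<times> ends \<times> tile list) option" where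
  "step p H E B m = (case m of
     Pass \<Rightarrow> (case E of None \<Rightarrow> None
              | Some e \<Rightarrow> if playable (H p) e then None else Some (H, E, B))
   | Play t left \<Rightarrow>
       (if t \<notin> H p then None else
        (case E of
           None \<Rightarrow> Some (H(p := H p - {t}), Some (fst t, snd t), B @ [t])
         | Some (l, r) \<Rightarrow>
             (if left then
                (if matches t l then Some (H(p := H p - {t}), Some (other t l, r), B @ [t]) else None)
              else
                (if matches t r then Some (H(p := H p - {t}), Some (l, other t r), B @ [t]) else None)))))"

definition game_over :: "(nat \<Rightarrow> tile set) \<Rightarrow> ends \<Rightarrow> bool" where
  "game_over H E \<longleftrightarrow> (case E of None \<Rightarrow> False
      | Some e \<Rightarrow> (\<exists>p<4. H p = {}) \<or> (\<forall>p<4. \<not> playable (H p) e))"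

fun run :: "(nat \<Rightarrow> tile set) \<Rightarrow> ends \<Rightarrow> tile list \<Rightarrow> nat \<Rightarrow> move list
    \<Rightarrow> ((nat \<Rightarrow> tile set) \<times> ends \<times> tile list) option" where
  "run H E B k [] = Some (H, E, B)"
| "run H E B k (m # ms) =
     (if game_over H E then None
      else (case step (k mod 4) H E B m of
              None \<Rightarrow> None
            | Some (H', E', B') \<Rightarrow> run H' E' B' (Suc k) ms))"

definition is_tranca :: "(nat \<Rightarrow> tile set) \<Rightarrow> ends \<Rightarrow> bool" where
  "is_tranca H E \<longleftrightarrow> (case E of None \<Rightarrow> False
      | Some e \<Rightarrow> (\<forall>p<4. H p \<noteq> {}) \<and> (\<forall>p<4. \<not> playable (H p) e))"

definition team_pips :: "(nat \<Rightarrow> tile set) \<Rightarrow> nat \<Rightarrow> nat" where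
  "team_pips H i = sum pips (H i) + sum pips (H (i + 2))"

definition winner_gets :: "(nat \<Rightarrow> tile set) \<Rightarrow> nat \<Rightarrow> bool" where
  "winner_gets H n \<longleftrightarrow>
     (team_pips H 0 < team_pips H 1 \<and> team_pips H 1 = n)
   \<or> (team_pips H 1 < team_pips H 0 \<and> team_pips H 0 = n)"

definition tranca_minima :: "(nat \<Rightarrow> tile set) \<Rightarrow> move list \<Rightarrow> (nat \<Rightarrow> tile set) \<Rightarrow> bool" where
  "tranca_minima H ms Hf \<longleftrightarrow> (\<exists>Ef Bf. run H None [] 0 ms = Some (Hf, Ef, Bf)
      \<and> is_tranca Hf Ef \<and> sum_list (map pips Bf) = 42)"

end

theory Submission
  imports Defs
begin

text \<open>Player 1 opens with [0,1] and the players of team 1--3, helped once by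
  player 4 with [5,6], lay out all seven tiles carrying a 0 together with [5,6], [1,3] and [2,4];
  player 2, holding [3,3], [3,4], [3,5], [3,6], [4,4], [4,5], [4,6], never gets to move. The double [0,0]
  closes both ends on 0 with no 0 left in any hand, so the game is blocked with 42 pips on the
  board. Of the remaining \<open>168 - 42 = 126\<close> pips team 1--3 keeps only 19, so team 1--3 wins
  and scores the 107 pips of team 2--4.\<close>

lemma ex_less_four: "(\<exists>p<4::nat. P p) \<longleftrightarrow> P 0 \<or> P 1 \<or> P 2 \<or> P 3"
  by (auto simp: numeral_eq_Suc less_Suc_eq)

lemma all_less_four: "(\<forall>p<4::nat. P p) \<longleftrightarrow> P 0 \<and> P 1 \<and> P 2 \<and> P 3"
  by (auto simp: numeral_eq_Suc less_Suc_eq)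

lemma all_tiles_eq_swap_Sigma: "all_tiles = prod.swap ` (SIGMA b:{..6}. {..b})"
  by (auto simp: all_tiles_def image_iff)

lemma card_all_tiles: "card all_tiles = 28"
  by (simp add: all_tiles_eq_swap_Sigma card_image numeral_eq_Suc)

lemma is_dealI:
  assumes hands: "\<And>p. p < 4 \<Longrightarrow> H p \<subseteq> all_tiles \<and> card (H p) = 7"
    and disjoint: "\<And>p q. p < 4 \<Longrightarrow> q < 4 \<Longrightarrow> p \<noteq> q \<Longrightarrow> H p \<inter> H q = {}"
  shows "is_deal H"
proof -
  have finite_all_tiles: "finite all_tiles"
    using card_all_tiles card.infinite by fastforce
  have used: "(\<Union>p<4. H p) \<subseteq> all_tiles"
    using hands by blast
  have finite_hands: "\<And>p. p < 4 \<Longrightarrow> finite (H p)"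
    using hands finite_all_tiles finite_subset by blast
  have "card (\<Union>p<4. H p) = (\<Sum>p<4. card (H p))"
    using finite_hands disjoint by (intro card_UN_disjoint) auto
  also have "\<dots> = card all_tiles"
    using hands by (simp add: card_all_tiles)
  finally have "(\<Union>p<4. H p) = all_tiles"
    using card_subset_eq[OF finite_all_tiles used] by simp
  then show ?thesis
    unfolding is_deal_def using hands disjoint by blast
qed

definition example_deal :: "nat \<Rightarrow> tile set" where
  "example_deal p =
    (if p = 0 then {(0,0), (0,1), (0,3), (0,5), (1,4), (2,3), (2,4)}
     else if p = 1 then {(3,3), (3,4), (3,5), (3,6), (4,4), (4,5), (4,6)}
     else if p = 2 then {(0,2), (0,4), (0,6), (1,1), (1,2), (1,3), (2,2)}
     else {(1,5), (1,6), (2,5), (2,6), (5,5), (5,6), (6,6)})"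

definition example_game :: "move list" where
  "example_game =
    [Play (0,1) True, Pass, Play (0,6) True, Play (5,6) True,
     Play (0,5) True, Pass, Play (1,3) False, Pass,
     Play (0,3) False, Pass, Play (0,4) True, Pass,
     Play (2,4) True, Pass, Play (0,2) True, Pass,
     Play (0,0) True]"

definition example_final_hands :: "nat \<Rightarrow> tile set" where
  "example_final_hands = example_deal(0 := {(1,4), (2,3)}, 2 := {(1,1), (1,2), (2,2)},
     3 := {(1,5), (1,6), (2,5), (2,6), (5,5), (6,6)})"

definition example_board :: "tile list" where
  "example_board = [(0,1), (0,6), (5,6), (0,5), (1,3), (0,3), (0,4), (2,4), (0,2), (0,0)]"

lemma is_deal_example_deal: "is_deal example_deal"
proof (rule is_dealI)
  show "example_deal p \<subseteq> all_tiles \<and> card (example_deal p) = 7" for p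
    by (simp add: example_deal_def all_tiles_def)
  show "example_deal p \<inter> example_deal q = {}" if "p < 4" "q < 4" "p \<noteq> q" for p q
    using that by (simp add: example_deal_def)
qed

lemma run_example_game:
  "run example_deal None [] 0 example_game = Some (example_final_hands, Some (0,0), example_board)"
  by (simp add: example_game_def example_board_def example_final_hands_def example_deal_def
      step_def game_over_def playable_def matches_def other_def ex_less_four all_less_four
      mod_Suc insert_Diff_if)
    (simp add: fun_eq_iff)

lemma tranca_minima_example_game: "tranca_minima example_deal example_game example_final_hands"
  unfolding tranca_minima_def run_example_game
  by (simp add: is_tranca_def all_less_four playable_def matches_def example_final_hands_def
      example_deal_def example_board_def pips_def)

lemma winner_gets_example_final_hands: "winner_gets example_final_hands 107"
  by (simp add: winner_gets_def team_pips_def example_final_hands_def example_deal_def pips_def)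

theorem mainTheorem8:
  shows "\<exists>H ms Hf. is_deal H \<and> tranca_minima H ms Hf \<and> winner_gets Hf 107"
  using is_deal_example_deal tranca_minima_example_game winner_gets_example_final_hands
  by blast

end
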